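(* Let $n>1$. For every index $i=0,\dots,n$ and all $\mathbf x,\mathbf y\in I_{n-1}$ we have $$\bigl\|(\Phi\circ\Delta_i)(\mathbf x)-(\Phi\circ\Delta_i)(\mathbf y)\bigr\|\le c_6\,6^n\,\|\mathbf x-\mathbf y\|,$$ where $c_6=\sqrt3/8$ and $\|\cdot\|$ is the sup-norm.
   Context: $I_m=\{(x_1,\dots,x_m)\in\mathbb{R}^m:-2\le x_1\le\cdots\le x_m\le2\}$. Maps $\Delta_i:I_{n-1}\to I_n$ ($0\le i\le n$): $\Delta_0(x_1,\dots,x_{n-1})=(-2,x_1,\dots,x_{n-1})$; for $0<i<n$, $\Delta_i(x_1,\dots,x_{n-1})=(x_1,\dots,x_{i-1},x_i,x_i,x_{i+1},\dots,x_{n-1})$; $\Delta_n(x_1,\dots,x_{n-1})=(x_1,\dots,x_{n-1},2)$. For $\mathbf c\in\mathbb{R}^n$ let $h_{\mathbf c}=x^n+c_1x^{n-1}+\cdots+c_n$, and for $\mathbf b\in\mathbb{R}^n$ let $g_{\mathbf b}=(x^{2n}+1)+b_1(x^{2n-1}+x)+\cdots+b_{n-1}(x^{n+1}+x^{n-1})+b_nx^n$. $\Psi(\mathbf r)=\mathbf c$ where $(x-r_1)\cdots(x-r_n)=h_{\mathbf c}$; $\mathrm X(\mathbf c)=\mathbf b$ where $x^nh_{\mathbf c}(x+1/x)=g_{\mathbf b}$; $\Phi=\mathrm X\circ\Psi$. *)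

theory Defs
  imports "HOL-Computational_Algebra.Polynomial"
begin

(* Points of R^m are represented as real lists of length m; entry k (0-based) is x_{k+1}. *)

definition I_set :: "nat \<Rightarrow> real list set" where
  "I_set m = {xs. length xs = m \<and> sorted xs \<and> (\<forall>x\<in>set xs. -2 \<le> x \<and> x \<le> 2)}"

definition Delta :: "nat \<Rightarrow> nat \<Rightarrow> real list \<Rightarrow> real list" where
  "Delta n i xs =
     (if i = 0 then (-2) # xs
      else if i = n then xs @ [2]
      else take i xs @ [xs ! (i - 1)] @ drop i xs)"

definition h_poly :: "real list \<Rightarrow> real poly" where
  "h_poly c = (let n = length c in
     monom 1 n + (\<Sum>k=1..n. monom (c ! (k - 1)) (n - k)))"

(* Psi(r) = c where (x-r_1)...(x-r_n) = h_c *)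
definition Psi :: "real list \<Rightarrow> real list" where
  "Psi rs = (let n = length rs; h = (\<Prod>r\<leftarrow>rs. [:-r, 1:]) in
     map (\<lambda>k. coeff h (n - k)) [1..<n+1])"

(* x^n h_c(x + 1/x), written out as a polynomial:
   sum over j of c_j x^j (x^2+1)^(n-j), with c_0 = 1 *)
definition palin_poly :: "real list \<Rightarrow> real poly" where
  "palin_poly c = (let n = length c in
     (\<Sum>j=0..n. smult (if j = 0 then 1 else c ! (j - 1)) (monom 1 j * [:1, 0, 1:] ^ (n - j))))"

definition g_poly :: "real list \<Rightarrow> real poly" where
  "g_poly b = (let n = length b in
     monom 1 (2*n) + 1 + (\<Sum>k=1..n-1. smult (b ! (k - 1)) (monom 1 (2*n-k) + monom 1 k))
       + (if n = 0 then 0 else monom (b ! (n - 1)) n))"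

(* X(c) = b where x^n h_c(x+1/x) = g_b : b_k is the coefficient of x^(2n-k) *)
definition Xmap :: "real list \<Rightarrow> real list" where
  "Xmap c = (let n = length c in map (\<lambda>k. coeff (palin_poly c) (2*n - k)) [1..<n+1])"

definition Phi :: "real list \<Rightarrow> real list" where
  "Phi = Xmap \<circ> Psi"

definition supnorm :: "real list \<Rightarrow> real" where
  "supnorm xs = Max (insert 0 (abs ` set xs))"

definition vdiff :: "real list \<Rightarrow> real list \<Rightarrow> real list" where
  "vdiff xs ys = map2 (-) xs ys"

end

theory Submission
  imports Defs
begin

(* With h = prod_k (x - r_k), Phi r lists the coefficients of
   x^n h(x + 1/x) = prod_k (x^2 - r_k x + 1).  When |r_k| <= 2 each factor is dominated
   coefficientwise by (1 + x)^2, and replacing one r_k by s_k with |r_k - s_k| <= d changes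
   that factor by a multiple of d x.  Telescoping, the difference of the products for r and s
   is dominated by n d x (1 + x)^(2n-2), whose coefficients are at most
   n d 2^(2n-3) = n 4^n d / 8 <= (3/2)^n 4^n d / 8 <= sqrt 3 / 8 * 6^n d.
   Finally Delta_i only duplicates an entry or adds an entry -2 or 2, which preserves both the
   bound |r_k| <= 2 and the entrywise distance. *)

definition majorizes :: "'a::linordered_idom poly \<Rightarrow> 'a poly \<Rightarrow> bool" where
  "majorizes q p \<longleftrightarrow> (\<forall>i. \<bar>coeff p i\<bar> \<le> coeff q i)"

lemma majorizes_coeff_nonneg: "majorizes q p \<Longrightarrow> 0 \<le> coeff q i"
  unfolding majorizes_def by (meson abs_ge_zero order_trans)

lemma majorizes_add: "majorizes q1 p1 \<Longrightarrow> majorizes q2 p2 \<Longrightarrow> majorizes (q1 + q2) (p1 + p2)"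
  unfolding majorizes_def by (auto intro: order_trans[OF abs_triangle_ineq add_mono])

lemma majorizes_mult:
  assumes "majorizes q1 p1" "majorizes q2 p2"
  shows "majorizes (q1 * q2) (p1 * p2)"
  unfolding majorizes_def
proof
  fix n
  have "\<bar>coeff (p1 * p2) n\<bar> \<le> (\<Sum>i\<le>n. \<bar>coeff p1 i\<bar> * \<bar>coeff p2 (n - i)\<bar>)"
    unfolding coeff_mult abs_mult[symmetric] by (rule sum_abs)
  also have "\<dots> \<le> (\<Sum>i\<le>n. coeff q1 i * coeff q2 (n - i))"
    using assms by (intro sum_mono mult_mono) (auto simp: majorizes_def majorizes_coeff_nonneg)
  finally show "\<bar>coeff (p1 * p2) n\<bar> \<le> coeff (q1 * q2) n"
    unfolding coeff_mult .
qed

lemma Suc_choose_le_power2: "Suc m choose k \<le> 2 ^ m"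
proof (induction m arbitrary: k)
  case 0
  show ?case
    using binomial_le_pow2[of 0] by (cases k) auto
next
  case (Suc m)
  note IH = Suc.IH
  show ?case
  proof (cases k)
    case (Suc j)
    then have "Suc (Suc m) choose k = (Suc m choose j) + (Suc m choose Suc j)"
      by simp
    also have "\<dots> \<le> 2 ^ m + 2 ^ m"
      using IH by (intro add_mono)
    finally show ?thesis by simp
  qed simp
qed

lemma coeff_X_mult_one_plus_X_power_le:
  assumes "N \<ge> 1"
  shows "coeff ([:0, 1:] * [:1, 1:] ^ N :: real poly) k \<le> 2 ^ (N - 1)"
proof -
  have "coeff ([:1, 1:] ^ N :: real poly) j \<le> 2 ^ (N - 1)" for j
  proof (cases "j \<le> N")
    case True
    have "N choose j \<le> 2 ^ (N - 1)"
      using Suc_choose_le_power2[of "N - 1" j] assms by simp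
    then show ?thesis
      using True by (simp add: coeff_linear_poly_power flip: of_nat_le_iff)
  next
    case False
    then show ?thesis
      using degree_power_le[of "[:1, 1::real:]" N] by (simp add: coeff_eq_0)
  qed
  then show ?thesis by (cases k) (auto simp: coeff_pCons)
qed

lemma poly_eqI_nonzero:
  fixes p q :: "'a::{idom, ring_char_0} poly"
  assumes "\<And>x. x \<noteq> 0 \<Longrightarrow> poly p x = poly q x"
  shows "p = q"
proof (rule ccontr)
  assume "p \<noteq> q"
  then have "finite {x. poly (p - q) x = 0}"
    by (intro poly_roots_finite) simp
  moreover have "UNIV = insert 0 {x. poly (p - q) x = 0}"
    using assms by auto
  ultimately show False
    using infinite_UNIV_char_0 by (metis finite_insert)
qed

lemma poly_palin_poly_coeffs:
  fixes h :: "real poly" and x :: real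
  assumes "degree h = n" "lead_coeff h = 1" "x \<noteq> 0"
  shows "poly (palin_poly (map (\<lambda>k. coeff h (n - k)) [1..<n+1])) x = x ^ n * poly h (x + 1 / x)"
proof -
  have coeffs: "(if j = 0 then 1 else map (\<lambda>k. coeff h (n - k)) [1..<n+1] ! (j - 1)) = coeff h (n - j)"
    if "j \<le> n" for j
    using that assms by (auto simp: nth_Cons' simp del: upt_Suc)
  have "poly (palin_poly (map (\<lambda>k. coeff h (n - k)) [1..<n+1])) x
      = (\<Sum>j=0..n. coeff h (n - j) * (x ^ j * (x\<^sup>2 + 1) ^ (n - j)))"
    unfolding palin_poly_def Let_def
    by (auto simp: poly_sum poly_monom power2_eq_square coeffs add.commute simp del: upt_Suc
        intro!: sum.cong)
  also have "\<dots> = (\<Sum>m=0..n. coeff h m * (x ^ (n - m) * (x\<^sup>2 + 1) ^ m))"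
    by (rule sum.reindex_bij_witness[of _ "\<lambda>m. n - m" "\<lambda>j. n - j"]) auto
  also have "\<dots> = (\<Sum>m=0..n. x ^ n * (coeff h m * (x + 1 / x) ^ m))"
  proof (intro sum.cong refl)
    fix m assume "m \<in> {0..n}"
    then have "x ^ n = x ^ (n - m) * x ^ m"
      by (simp flip: power_add)
    moreover have "x ^ m * (x + 1 / x) ^ m = (x\<^sup>2 + 1) ^ m"
      using assms by (simp flip: power_mult_distrib add: field_simps power2_eq_square)
    ultimately show "coeff h m * (x ^ (n - m) * (x\<^sup>2 + 1) ^ m) = x ^ n * (coeff h m * (x + 1 / x) ^ m)"
      by (metis mult.assoc mult.left_commute)
  qed
  also have "\<dots> = x ^ n * poly h (x + 1 / x)"
    using assms by (simp add: poly_altdef sum_distrib_left atLeast0AtMost)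
  finally show ?thesis .
qed

definition palin_prod :: "real list \<Rightarrow> real poly" where
  "palin_prod rs = (\<Prod>r\<leftarrow>rs. [:1, -r, 1:])"

lemma lead_coeff_prod_linear_factors: "lead_coeff (\<Prod>r\<leftarrow>rs. [:-r, 1:]) = (1::'a::idom)"
  by (induction rs) (simp_all add: lead_coeff_mult del: mult_pCons_left)

lemma degree_prod_linear_factors: "degree (\<Prod>r\<leftarrow>rs. [:-r, 1::'a::idom:]) = length rs"
proof (induction rs)
  case (Cons r rs)
  have "(\<Prod>r\<leftarrow>rs. [:-r, 1::'a:]) \<noteq> 0"
    using lead_coeff_prod_linear_factors[of rs] by auto
  with Cons show ?case
    by (simp add: degree_mult_eq del: mult_pCons_left)
qed simp

lemma palin_poly_Psi: "palin_poly (Psi rs) = palin_prod rs"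
proof (rule poly_eqI_nonzero)
  fix x :: real assume "x \<noteq> 0"
  have "poly (\<Prod>r\<leftarrow>rs. [:-r, 1:]) y = (\<Prod>r\<leftarrow>rs. y - r)" for y :: real
    by (induction rs) (auto simp: algebra_simps)
  with \<open>x \<noteq> 0\<close> have "poly (palin_poly (Psi rs)) x = x ^ length rs * (\<Prod>r\<leftarrow>rs. x + 1 / x - r)"
    unfolding Psi_def Let_def
    by (subst poly_palin_poly_coeffs[OF degree_prod_linear_factors lead_coeff_prod_linear_factors]) simp_all
  also have "\<dots> = poly (palin_prod rs) x"
    using \<open>x \<noteq> 0\<close> by (induction rs) (auto simp: palin_prod_def field_simps power2_eq_square)
  finally show "poly (palin_poly (Psi rs)) x = poly (palin_prod rs) x" .
qed

lemma length_Psi: "length (Psi rs) = length rs"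
  by (simp add: Psi_def Let_def del: upt_Suc)

lemma length_Phi: "length (Phi rs) = length rs"
  by (simp add: Phi_def Xmap_def Let_def length_Psi del: upt_Suc)

lemma nth_Phi: "k < length rs \<Longrightarrow> Phi rs ! k = coeff (palin_prod rs) (2 * length rs - Suc k)"
  by (simp add: Phi_def Xmap_def Let_def palin_poly_Psi length_Psi del: upt_Suc)

lemma majorizes_quadratic_factor: "\<bar>a\<bar> \<le> 2 \<Longrightarrow> majorizes ([:1, 1:] ^ 2) [:1, -a, 1:]"
  by (auto simp: majorizes_def power2_eq_square coeff_pCons split: nat.splits)

lemma majorizes_palin_prod:
  "\<forall>a\<in>set rs. \<bar>a\<bar> \<le> 2 \<Longrightarrow> majorizes ([:1, 1:] ^ (2 * length rs)) (palin_prod rs)"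
proof (induction rs)
  case Nil
  then show ?case by (simp add: palin_prod_def majorizes_def)
next
  case (Cons a rs)
  then have "majorizes ([:1, 1:] ^ 2 * [:1, 1:] ^ (2 * length rs)) ([:1, -a, 1:] * palin_prod rs)"
    by (intro majorizes_mult majorizes_quadratic_factor) auto
  then show ?case
    by (simp add: palin_prod_def flip: power_add)
qed

lemma majorizes_palin_prod_diff:
  assumes "list_all2 (\<lambda>a b. \<bar>a - b\<bar> \<le> d) rs ss"
    and "\<forall>a\<in>set rs. \<bar>a\<bar> \<le> 2" and "\<forall>b\<in>set ss. \<bar>b\<bar> \<le> 2"
  shows "majorizes (smult (of_nat (length rs) * d) ([:0, 1:] * [:1, 1:] ^ (2 * length rs - 2)))
           (palin_prod rs - palin_prod ss)"
  using assms
proof (induction rule: list_all2_induct)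
  case Nil
  then show ?case by (simp add: majorizes_def)
next
  case (Cons a rs b ss)
  let ?k = "length rs"
  have "palin_prod (a # rs) - palin_prod (b # ss)
      = [:0, b - a:] * palin_prod rs + [:1, -b, 1:] * (palin_prod rs - palin_prod ss)"
    by (simp add: palin_prod_def algebra_simps flip: smult_add_left)
  moreover have "majorizes (smult d [:0, 1:] * [:1, 1:] ^ (2 * ?k)) ([:0, b - a:] * palin_prod rs)"
    using Cons by (intro majorizes_mult majorizes_palin_prod)
      (auto simp: majorizes_def coeff_pCons split: nat.splits)
  moreover have "majorizes ([:1, 1:] ^ 2 * smult (of_nat ?k * d) ([:0, 1:] * [:1, 1:] ^ (2 * ?k - 2)))
      ([:1, -b, 1:] * (palin_prod rs - palin_prod ss))"
    using Cons by (intro majorizes_mult majorizes_quadratic_factor) auto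
  moreover have "smult d [:0, 1:] * [:1, 1:] ^ (2 * ?k)
      + [:1, 1:] ^ 2 * smult (of_nat ?k * d) ([:0, 1:] * [:1, 1:] ^ (2 * ?k - 2))
      = smult (of_nat (Suc ?k) * d) ([:0, 1:] * [:1, 1::real:] ^ (2 * ?k))"
  proof (cases "?k = 0")
    case False
    then have "2 + (2 * ?k - 2) = 2 * ?k"
      by linarith
    then have "[:1, 1:] ^ 2 * [:1, 1:] ^ (2 * ?k - 2) = ([:1, 1:] ^ (2 * ?k) :: real poly)"
      by (metis power_add)
    then show ?thesis
      by (simp add: mult.left_commute[of "[:1, 1:] ^ 2"] distrib_right flip: smult_add_left)
  qed simp
  ultimately show ?case
    using majorizes_add by fastforce
qed

lemma real_le_three_halves_power: "2 \<le> n \<Longrightarrow> real n \<le> (3 / 2) ^ n"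
proof (induction n rule: dec_induct)
  case base
  then show ?case by (simp add: power2_eq_square)
next
  case (step n)
  have "(3 / 2 :: real) ^ 2 \<le> (3 / 2) ^ n"
    using step by (intro power_increasing) auto
  then show ?case
    using step by (simp add: power2_eq_square)
qed

lemma real_mult_power2_le_six_power: "2 \<le> n \<Longrightarrow> real n * 2 ^ (2 * n - 3) \<le> sqrt 3 / 8 * 6 ^ n"
proof -
  assume "2 \<le> n"
  then have "2 * n - 3 + 3 = 2 * n"
    by linarith
  then have "(2::real) ^ (2 * n - 3) * 2 ^ 3 = 2 ^ (2 * n)"
    by (metis power_add)
  then have "real n * 2 ^ (2 * n - 3) * 8 = real n * 4 ^ n"
    by (simp add: power_mult)
  also have "\<dots> \<le> (3 / 2) ^ n * 4 ^ n"
    using real_le_three_halves_power[OF \<open>2 \<le> n\<close>] by (intro mult_right_mono) auto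
  also have "\<dots> \<le> sqrt 3 * 6 ^ n"
    by (simp flip: power_mult_distrib)
  finally show ?thesis
    by simp
qed

lemma abs_coeff_palin_prod_diff_le:
  assumes "list_all2 (\<lambda>a b. \<bar>a - b\<bar> \<le> d) rs ss"
    and "\<forall>a\<in>set rs. \<bar>a\<bar> \<le> 2" and "\<forall>b\<in>set ss. \<bar>b\<bar> \<le> 2"
    and "2 \<le> length rs" and "0 \<le> d"
  shows "\<bar>coeff (palin_prod rs - palin_prod ss) k\<bar> \<le> sqrt 3 / 8 * 6 ^ length rs * d"
proof -
  let ?n = "length rs"
  have "\<bar>coeff (palin_prod rs - palin_prod ss) k\<bar>
      \<le> real ?n * d * coeff ([:0, 1:] * [:1, 1:] ^ (2 * ?n - 2)) k"
    using majorizes_palin_prod_diff[OF assms(1-3)] unfolding majorizes_def coeff_smult by blast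
  also have "\<dots> \<le> real ?n * d * 2 ^ (2 * ?n - 3)"
    using coeff_X_mult_one_plus_X_power_le[of "2 * ?n - 2" k] assms(4,5)
    by (intro mult_left_mono) (auto simp: numeral_3_eq_3)
  also have "\<dots> = real ?n * 2 ^ (2 * ?n - 3) * d"
    by (simp add: ac_simps)
  also have "\<dots> \<le> sqrt 3 / 8 * 6 ^ ?n * d"
    using real_mult_power2_le_six_power[OF assms(4)] assms(5) by (rule mult_right_mono)
  finally show ?thesis .
qed

lemma supnorm_nonneg: "0 \<le> supnorm xs"
  by (simp add: supnorm_def Max_ge_iff)

lemma supnorm_le: "0 \<le> B \<Longrightarrow> (\<And>t. t < length xs \<Longrightarrow> \<bar>xs ! t\<bar> \<le> B) \<Longrightarrow> supnorm xs \<le> B"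
  by (auto simp: supnorm_def in_set_conv_nth)

lemma abs_nth_le_supnorm: "t < length xs \<Longrightarrow> \<bar>xs ! t\<bar> \<le> supnorm xs"
  by (simp add: supnorm_def Max_ge_iff)

lemma list_all2_abs_diff_le_supnorm:
  assumes "length xs = length ys"
  shows "list_all2 (\<lambda>a b. \<bar>a - b\<bar> \<le> supnorm (vdiff xs ys)) xs ys"
proof -
  have "\<bar>xs ! t - ys ! t\<bar> \<le> supnorm (vdiff xs ys)" if "t < length xs" for t
    using abs_nth_le_supnorm[of t "vdiff xs ys"] that assms by (simp add: vdiff_def)
  with assms show ?thesis
    by (simp add: list_all2_conv_all_nth)
qed

lemma supnorm_vdiff_Phi_le:
  assumes "list_all2 (\<lambda>a b. \<bar>a - b\<bar> \<le> d) rs ss"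
    and "\<forall>a\<in>set rs. \<bar>a\<bar> \<le> 2" and "\<forall>b\<in>set ss. \<bar>b\<bar> \<le> 2"
    and "2 \<le> length rs" and "0 \<le> d"
  shows "supnorm (vdiff (Phi rs) (Phi ss)) \<le> sqrt 3 / 8 * 6 ^ length rs * d"
proof (rule supnorm_le)
  fix t
  assume "t < length (vdiff (Phi rs) (Phi ss))"
  moreover have "length ss = length rs"
    using assms(1) by (rule list_all2_lengthD[symmetric])
  ultimately have "vdiff (Phi rs) (Phi ss) ! t
      = coeff (palin_prod rs - palin_prod ss) (2 * length rs - Suc t)"
    by (simp add: vdiff_def length_Phi nth_Phi)
  then show "\<bar>vdiff (Phi rs) (Phi ss) ! t\<bar> \<le> sqrt 3 / 8 * 6 ^ length rs * d"
    using abs_coeff_palin_prod_diff_le[OF assms] by simp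
qed (use assms(5) in simp)

lemma length_Delta: "length xs = n - 1 \<Longrightarrow> 0 < n \<Longrightarrow> i \<le> n \<Longrightarrow> length (Delta n i xs) = n"
  by (auto simp: Delta_def)

lemma set_Delta_subset:
  "length xs = n - 1 \<Longrightarrow> i \<le> n \<Longrightarrow> set (Delta n i xs) \<subseteq> insert (-2) (insert 2 (set xs))"
  by (auto simp: Delta_def dest: in_set_takeD in_set_dropD)

lemma list_all2_Delta:
  assumes "list_all2 P xs ys" "length xs = n - 1" "i \<le> n" "P (-2) (-2)" "P 2 2"
  shows "list_all2 P (Delta n i xs) (Delta n i ys)"
  using assms by (auto simp: Delta_def list_all2_appendI list_all2_takeI list_all2_dropI list_all2_nthD)

theorem lemma2p3p3:
  fixes n i :: nat and x y :: "real list"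
  assumes "n > 1" and "i \<le> n"
    and "x \<in> I_set (n - 1)" and "y \<in> I_set (n - 1)"
  shows "supnorm (vdiff (Phi (Delta n i x)) (Phi (Delta n i y)))
           \<le> (sqrt 3 / 8) * 6 ^ n * supnorm (vdiff x y)"
proof -
  let ?d = "supnorm (vdiff x y)"
  have len: "length x = n - 1" "length y = n - 1"
    and bounded: "\<forall>a\<in>set x. \<bar>a\<bar> \<le> 2" "\<forall>b\<in>set y. \<bar>b\<bar> \<le> 2"
    using assms(3,4) by (auto simp: I_set_def abs_le_iff)
  have "list_all2 (\<lambda>a b. \<bar>a - b\<bar> \<le> ?d) (Delta n i x) (Delta n i y)"
    using list_all2_abs_diff_le_supnorm[of x y] len assms(2) supnorm_nonneg
    by (intro list_all2_Delta) auto
  moreover have "\<forall>a\<in>set (Delta n i x). \<bar>a\<bar> \<le> 2" "\<forall>b\<in>set (Delta n i y). \<bar>b\<bar> \<le> 2"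
    using set_Delta_subset[OF len(1) assms(2)] set_Delta_subset[OF len(2) assms(2)] bounded
    by auto
  moreover have "length (Delta n i x) = n"
    using length_Delta[OF len(1)] assms(1,2) by simp
  ultimately show ?thesis
    using supnorm_vdiff_Phi_le assms(1) supnorm_nonneg by fastforce
qed

end
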